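(* Let $\rho$ be a positive integer and $v$ an integer with $v \ge 9\rho + 31$. Then \[ \beta(\rho,v,4) \le \frac{\rho v}{3} + 5\rho^2 - \frac{16\rho}{3}. \]
   Context: For integers $v \ge k \ge 2$, a $(v,k)$-packing is a pair $(X,\mathcal{B})$ where $X$ is a set of $v$ points and $\mathcal{B}$ is a set of $k$-subsets of $X$ (blocks) such that every pair of distinct points lies in at most one block. A partial parallel class (PPC) is a set of pairwise disjoint blocks; its size is the number of blocks. A PPC of size $\rho$ is maximum if the packing has no PPC of size $\rho+1$. $\beta(\rho,v,k)$ denotes the maximum number of blocks in a $(v,k)$-packing in which the maximum PPC has size $\rho$. *)

theory Defs
  imports Complex_Main
begin

definition packing :: "nat \<Rightarrow> nat \<Rightarrow> 'a set \<Rightarrow> 'a set set \<Rightarrow> bool" where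
  "packing v k X \<B> \<longleftrightarrow>
     2 \<le> k \<and> k \<le> v \<and> finite X \<and> card X = v \<and>
     (\<forall>b\<in>\<B>. b \<subseteq> X \<and> card b = k) \<and>
     (\<forall>x\<in>X. \<forall>y\<in>X. x \<noteq> y \<longrightarrow> card {b\<in>\<B>. x \<in> b \<and> y \<in> b} \<le> 1)"

definition ppc :: "'a set set \<Rightarrow> 'a set set \<Rightarrow> bool" where
  "ppc \<B> P \<longleftrightarrow> P \<subseteq> \<B> \<and> (\<forall>b\<in>P. \<forall>c\<in>P. b \<noteq> c \<longrightarrow> b \<inter> c = {})"

definition max_ppc_size :: "'a set set \<Rightarrow> nat \<Rightarrow> bool" where
  "max_ppc_size \<B> \<rho> \<longleftrightarrow>
     (\<exists>P. ppc \<B> P \<and> card P = \<rho>) \<and> \<not> (\<exists>P. ppc \<B> P \<and> card P = \<rho> + 1)"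

text \<open>beta(rho,v,k): the maximum number of blocks in a (v,k)-packing whose maximum
  PPC has size rho (points taken WLOG to be natural numbers; the set of values
  is bounded since blocks are subsets of a finite point set).\<close>
definition beta :: "nat \<Rightarrow> nat \<Rightarrow> nat \<Rightarrow> nat" where
  "beta \<rho> v k = Sup {card \<B> | (X :: nat set) \<B>. packing v k X \<B> \<and> max_ppc_size \<B> \<rho>}"

end

theory Submission imports Defs begin

text \<open>Let P be a maximum partial parallel class, U (covered) the 4\<rho> points it covers
  and W (uncovered) the remaining v - 4\<rho> points. By maximality every block meets U, so if
  each block C outside P spreads one unit of weight evenly over the points of C \<inter> U, then
  the number of blocks is \<rho> plus the total weight of U. The blocks through a point x of U
  other than its P-block meet each other and that P-block only in x; counting their points
  in W and in U bounds the weight of x both by (|W| + \<rho> - 1)/3 and by |F x| + 2(\<rho> - 1),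
  where F x (pendant_blocks x) is the set of blocks meeting U in x alone. If |F x| \<ge> 4, then
  F y is empty for every other point y of the P-block b of x: a block of F y misses some block
  of F x, and these two could replace b in P. Either way b carries weight at most
  (|W| + \<rho> - 1)/3 + 6(\<rho> - 1) once |W| \<ge> 5\<rho> + 31, and summing over the \<rho> blocks of P gives
  the bound.\<close>

lemma real_Sup_nat_le:
  fixes S :: "nat set"
  assumes "bdd_above S" and "\<And>n. n \<in> S \<Longrightarrow> real n \<le> R" and "0 \<le> R"
  shows "real (Sup S) \<le> R"
proof (cases "S = {}")
  case False
  with assms(1) have "Sup S \<in> S"
    by (simp add: Sup_nat_def bdd_above_nat)
  then show ?thesis using assms(2) by blast
qed (simp add: assms(3))

lemma card_packing_le:
  assumes "packing v k X \<B>"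
  shows "card \<B> \<le> 2 ^ v"
proof -
  have "\<B> \<subseteq> Pow X" "finite X" "card X = v"
    using assms unfolding packing_def by auto
  then show ?thesis by (metis card_Pow card_mono finite_Pow_iff)
qed

locale max_ppc_packing =
  fixes X :: "'a set" and B :: "'a set set" and v k \<rho> :: nat and P :: "'a set set"
  assumes packing: "packing v k X B"
    and ppc: "ppc B P" and card_P: "card P = \<rho>"
    and no_larger_ppc: "\<not> (\<exists>P'. ppc B P' \<and> card P' = \<rho> + 1)"
begin

definition covered :: "'a set" where "covered = \<Union>P"
definition uncovered :: "'a set" where "uncovered = X - covered"
definition blocks_through :: "'a \<Rightarrow> 'a set set" where
  "blocks_through x = {C \<in> B - P. x \<in> C}"
definition pendant_blocks :: "'a \<Rightarrow> 'a set set" where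
  "pendant_blocks x = {C \<in> blocks_through x. C \<inter> covered = {x}}"
definition weight :: "'a \<Rightarrow> real" where
  "weight x = (\<Sum>C\<in>blocks_through x. 1 / real (card (C \<inter> covered)))"

lemma finite_X: "finite X" and card_X: "card X = v"
  and block_subset: "C \<in> B \<Longrightarrow> C \<subseteq> X" and card_block: "C \<in> B \<Longrightarrow> card C = k"
  using packing unfolding packing_def by auto

lemma finite_block: "C \<in> B \<Longrightarrow> finite C"
  using block_subset finite_X finite_subset by blast

lemma finite_B: "finite B"
  using block_subset finite_X by (meson Pow_iff finite_Pow_iff finite_subset subsetI)

lemma P_subset: "P \<subseteq> B" and P_disjoint: "b \<in> P \<Longrightarrow> c \<in> P \<Longrightarrow> b \<noteq> c \<Longrightarrow> b \<inter> c = {}"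
  using ppc unfolding ppc_def by auto

lemma finite_P: "finite P"
  using finite_B P_subset finite_subset by blast

lemma finite_covered: "finite covered"
  unfolding covered_def using finite_P P_subset finite_block by blast

lemma blocks_inter_subsingleton:
  assumes "C \<in> B" "D \<in> B" "C \<noteq> D" "x \<in> C \<inter> D" "y \<in> C \<inter> D"
  shows "x = y"
proof (rule ccontr)
  assume "x \<noteq> y"
  moreover have "x \<in> X" "y \<in> X" using assms block_subset by auto
  ultimately have "card {b\<in>B. x \<in> b \<and> y \<in> b} \<le> 1"
    using packing unfolding packing_def by blast
  moreover have "{C, D} \<subseteq> {b\<in>B. x \<in> b \<and> y \<in> b}" using assms by auto
  moreover have "finite {b\<in>B. x \<in> b \<and> y \<in> b}" using finite_B by simp
  ultimately have "card {C, D} \<le> 1" by (meson card_mono order_trans)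
  with assms(3) show False by simp
qed

lemma card_covered: "card covered = k * \<rho>"
proof -
  have "card covered = (\<Sum>b\<in>P. card b)" unfolding covered_def
    using P_disjoint P_subset finite_block
    by (intro card_Union_disjoint) (auto simp: pairwise_def disjnt_def)
  also have "\<dots> = (\<Sum>b\<in>P. k)" using P_subset card_block by (intro sum.cong) auto
  finally show ?thesis using card_P by simp
qed

lemma card_uncovered: "card uncovered = v - k * \<rho>"
proof -
  have "covered \<subseteq> X" unfolding covered_def using P_subset block_subset by blast
  then show ?thesis
    unfolding uncovered_def using card_Diff_subset finite_covered card_X card_covered by metis
qed

lemma block_meets_covered:
  assumes C: "C \<in> B"
  shows "C \<inter> covered \<noteq> {}"
proof
  assume disj: "C \<inter> covered = {}"
  have "C \<noteq> {}" using card_block[OF C] packing unfolding packing_def by auto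
  then have "C \<notin> P" using disj unfolding covered_def by auto
  have "ppc B (insert C P)"
    using ppc C disj unfolding ppc_def covered_def by blast
  moreover have "card (insert C P) = \<rho> + 1" using \<open>C \<notin> P\<close> finite_P card_P by simp
  ultimately show False using no_larger_ppc by blast
qed

lemma finite_blocks_through: "finite (blocks_through x)"
  unfolding blocks_through_def using finite_B by simp

lemma card_B_eq_sum_weight: "real (card B) = real \<rho> + (\<Sum>b\<in>P. \<Sum>x\<in>b. weight x)"
proof -
  let ?share = "\<lambda>C. 1 / real (card (C \<inter> covered))"
  have "card B = card P + card (B - P)"
    using card_Diff_subset[OF finite_P P_subset] card_mono[OF finite_B P_subset] by simp
  moreover have share_sum: "(\<Sum>x | x \<in> covered \<and> x \<in> C. ?share C) = 1" if "C \<in> B" for C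
  proof -
    have "{x. x \<in> covered \<and> x \<in> C} = C \<inter> covered" by auto
    moreover have "card (C \<inter> covered) \<noteq> 0"
      using block_meets_covered finite_block that by simp
    ultimately show ?thesis by simp
  qed
  then have "(\<Sum>C\<in>B - P. \<Sum>x | x \<in> covered \<and> x \<in> C. ?share C) = (\<Sum>C\<in>B - P. 1)"
    by (meson DiffD1 sum.cong)
  then have "(\<Sum>C\<in>B - P. \<Sum>x | x \<in> covered \<and> x \<in> C. ?share C) = real (card (B - P))"
    by simp
  moreover have "(\<Sum>C\<in>B - P. \<Sum>x | x \<in> covered \<and> x \<in> C. ?share C) = (\<Sum>x\<in>covered. weight x)"
    unfolding weight_def blocks_through_def
    by (rule sum.swap_restrict[OF finite_Diff[OF finite_B] finite_covered])
  moreover have "\<dots> = (\<Sum>b\<in>P. \<Sum>x\<in>b. weight x)" unfolding covered_def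
    using finite_block P_subset P_disjoint by (subst sum.Union_disjoint) auto
  ultimately show ?thesis using card_P by simp
qed

lemma card_Int_covered_le: "C \<in> B \<Longrightarrow> card (C \<inter> covered) \<le> k"
  using card_block finite_block by (metis Int_lower1 card_mono)

lemma card_Int_uncovered: "C \<in> B \<Longrightarrow> card (C \<inter> uncovered) = k - card (C \<inter> covered)"
proof -
  assume C: "C \<in> B"
  then have "C \<inter> uncovered = C - C \<inter> covered"
    using block_subset unfolding uncovered_def by blast
  then show ?thesis using C card_block finite_block by (simp add: card_Diff_subset)
qed

context
  fixes x b assumes x_in_b: "x \<in> b" and b_in_P: "b \<in> P"
begin

lemma rho_pos: "1 \<le> \<rho>"
  using b_in_P finite_P card_P by (metis One_nat_def Suc_leI card_gt_0_iff empty_iff)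

lemma x_covered: "x \<in> covered"
  unfolding covered_def using x_in_b b_in_P by blast

lemma base_subset_covered: "b \<subseteq> covered"
  unfolding covered_def using b_in_P by blast

lemma blocks_through_inter_base:
  assumes "C \<in> blocks_through x"
  shows "C \<inter> b = {x}"
  using assms blocks_inter_subsingleton[of C b x] b_in_P P_subset x_in_b
  unfolding blocks_through_def by blast

lemma blocks_through_inter:
  assumes "C \<in> blocks_through x" "D \<in> blocks_through x" "C \<noteq> D"
  shows "C \<inter> D = {x}"
  using assms blocks_inter_subsingleton[of C D x] unfolding blocks_through_def by blast

lemma sum_card_blocks_through_Int_le:
  assumes "finite A" "x \<notin> A"
  shows "(\<Sum>C\<in>blocks_through x. card (C \<inter> A)) \<le> card A"
proof -
  have "(\<Sum>C\<in>blocks_through x. card (C \<inter> A)) = card (\<Union>C\<in>blocks_through x. C \<inter> A)"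
  proof (rule card_UN_disjoint[symmetric])
    show "\<forall>C\<in>blocks_through x. \<forall>D\<in>blocks_through x. C \<noteq> D \<longrightarrow> C \<inter> A \<inter> (D \<inter> A) = {}"
    proof (intro ballI impI)
      fix C D assume "C \<in> blocks_through x" "D \<in> blocks_through x" "C \<noteq> D"
      then have "C \<inter> D = {x}" by (rule blocks_through_inter)
      with assms(2) show "C \<inter> A \<inter> (D \<inter> A) = {}" by auto
    qed
  qed (simp_all add: finite_blocks_through assms(1))
  also have "\<dots> \<le> card A" using assms(1) by (intro card_mono) auto
  finally show ?thesis .
qed

lemma card_blocks_through_meeting_le:
  assumes "finite A" "x \<notin> A"
  shows "card {C \<in> blocks_through x. C \<inter> A \<noteq> {}} \<le> card A"
proof -
  let ?M = "{C \<in> blocks_through x. C \<inter> A \<noteq> {}}"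
  have "card ?M = (\<Sum>C\<in>?M. 1)" by simp
  also have "\<dots> \<le> (\<Sum>C\<in>?M. card (C \<inter> A))"
    using assms(1) by (intro sum_mono) (simp add: Suc_leI card_gt_0_iff)
  also have "\<dots> \<le> (\<Sum>C\<in>blocks_through x. card (C \<inter> A))"
    using finite_blocks_through by (intro sum_mono2) auto
  also have "\<dots> \<le> card A" using assms by (rule sum_card_blocks_through_Int_le)
  finally show ?thesis .
qed

lemma sum_card_uncovered_le:
  "(\<Sum>C\<in>blocks_through x. card (C \<inter> uncovered)) \<le> card uncovered"
  using x_covered finite_X
  by (intro sum_card_blocks_through_Int_le) (auto simp: uncovered_def)

lemma Int_covered_eq_insert:
  assumes "C \<in> blocks_through x"
  shows "C \<inter> covered = insert x (C \<inter> (covered - b))"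
  using blocks_through_inter_base[OF assms] base_subset_covered x_covered by blast

lemma card_Int_covered:
  assumes "C \<in> blocks_through x"
  shows "card (C \<inter> covered) = card (C \<inter> (covered - b)) + 1"
  using Int_covered_eq_insert[OF assms] finite_covered x_in_b by simp

lemma pendant_blocks_iff_card:
  assumes "C \<in> blocks_through x"
  shows "C \<in> pendant_blocks x \<longleftrightarrow> card (C \<inter> covered) = 1"
proof -
  have "C \<in> pendant_blocks x \<longleftrightarrow> C \<inter> (covered - b) = {}"
    using Int_covered_eq_insert[OF assms] assms x_in_b unfolding pendant_blocks_def by auto
  also have "\<dots> \<longleftrightarrow> card (C \<inter> covered) = 1"
    using card_Int_covered[OF assms] finite_covered by simp
  finally show ?thesis .
qed

lemma sum_card_covered_le:
  "(\<Sum>C\<in>blocks_through x. card (C \<inter> covered) - 1) \<le> k * (\<rho> - 1)"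
proof -
  have "(\<Sum>C\<in>blocks_through x. card (C \<inter> covered) - 1)
      = (\<Sum>C\<in>blocks_through x. card (C \<inter> (covered - b)))"
    using card_Int_covered by (intro sum.cong) auto
  also have "\<dots> \<le> card (covered - b)"
    using finite_covered x_in_b by (intro sum_card_blocks_through_Int_le) auto
  also have "\<dots> = k * (\<rho> - 1)"
  proof -
    have "b \<in> B" using b_in_P P_subset by blast
    then have "card (covered - b) = k * \<rho> - k"
      using card_Diff_subset[OF finite_block base_subset_covered] card_block card_covered by simp
    then show ?thesis by (simp add: diff_mult_distrib2)
  qed
  finally show ?thesis .
qed

lemma weight_le_pendant:
  "weight x \<le> real (card (pendant_blocks x)) + real k * (real \<rho> - 1) / 2"
proof -
  have reciprocal_le: "1 / real t \<le> of_bool (t = 1) + real (t - 1) / 2" if "1 \<le> t" for t :: nat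
  proof (cases "t = 1")
    case False
    with that have "2 \<le> t" by simp
    then have "1 / real t \<le> 1 / 2" by (intro divide_left_mono) auto
    moreover have "1 \<le> real (t - 1)" using \<open>2 \<le> t\<close> by linarith
    moreover have "of_bool (t = 1) = (0 :: real)" using False by simp
    ultimately show ?thesis by linarith
  qed simp
  have "weight x \<le> (\<Sum>C\<in>blocks_through x.
      of_bool (C \<in> pendant_blocks x) + real (card (C \<inter> covered) - 1) / 2)"
    unfolding weight_def
  proof (intro sum_mono)
    fix C assume C: "C \<in> blocks_through x"
    have "1 \<le> card (C \<inter> covered)" using card_Int_covered[OF C] by simp
    from reciprocal_le[OF this] show "1 / real (card (C \<inter> covered))
        \<le> of_bool (C \<in> pendant_blocks x) + real (card (C \<inter> covered) - 1) / 2"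
      unfolding pendant_blocks_iff_card[OF C] .
  qed
  also have "\<dots> = real (card (pendant_blocks x))
      + real (\<Sum>C\<in>blocks_through x. card (C \<inter> covered) - 1) / 2"
  proof -
    have "blocks_through x \<inter> {C. C \<in> pendant_blocks x} = pendant_blocks x"
      unfolding pendant_blocks_def by auto
    then show ?thesis
      using finite_blocks_through by (simp add: sum.distrib sum_divide_distrib)
  qed
  also have "\<dots> \<le> real (card (pendant_blocks x)) + real (k * (\<rho> - 1)) / 2"
    using sum_card_covered_le by (simp only: of_nat_le_iff divide_right_mono add_left_mono)
  finally show ?thesis using rho_pos by (simp add: of_nat_diff)
qed

lemma weight_le_uncovered:
  assumes "k = 4"
  shows "3 * weight x \<le> real (card uncovered) + real \<rho> - 1"
proof -
  have twelve_div_le: "12 / real t \<le> 4 * real (4 - t) + real (t - 1)"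
    if "1 \<le> t" "t \<le> 4" for t :: nat
  proof -
    have "t \<in> {1, 2, 3, 4}" using that by auto
    then show ?thesis by (elim insertE) auto
  qed
  have "12 * weight x = (\<Sum>C\<in>blocks_through x. 12 / real (card (C \<inter> covered)))"
    unfolding weight_def by (simp add: sum_distrib_left)
  also have "\<dots> \<le> (\<Sum>C\<in>blocks_through x.
      4 * real (card (C \<inter> uncovered)) + real (card (C \<inter> covered) - 1))"
  proof (intro sum_mono)
    fix C assume C: "C \<in> blocks_through x"
    then have "C \<in> B" unfolding blocks_through_def by simp
    have "1 \<le> card (C \<inter> covered)" "card (C \<inter> covered) \<le> 4"
      using card_Int_covered[OF C] card_Int_covered_le[OF \<open>C \<in> B\<close>] assms by auto
    then show "12 / real (card (C \<inter> covered))
        \<le> 4 * real (card (C \<inter> uncovered)) + real (card (C \<inter> covered) - 1)"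
      using twelve_div_le card_Int_uncovered[OF \<open>C \<in> B\<close>] assms by simp
  qed
  also have "\<dots> = 4 * real (\<Sum>C\<in>blocks_through x. card (C \<inter> uncovered))
      + real (\<Sum>C\<in>blocks_through x. card (C \<inter> covered) - 1)"
    by (simp add: sum.distrib sum_distrib_left)
  also have "\<dots> \<le> 4 * real (card uncovered) + real (k * (\<rho> - 1))"
    using sum_card_uncovered_le sum_card_covered_le
    by (simp only: of_nat_le_iff add_mono mult_left_mono)
  finally show ?thesis using rho_pos assms by (simp add: of_nat_diff)
qed

end

lemma pendant_blocks_meet:
  assumes "b \<in> P" "x \<in> b" "y \<in> b" "x \<noteq> y"
    and C: "C \<in> pendant_blocks x" and D: "D \<in> pendant_blocks y"
  shows "C \<inter> D \<noteq> {}"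
proof
  assume CD: "C \<inter> D = {}"
  have misses_rest: "E \<inter> c = {} \<and> c \<inter> E = {}"
    if "E \<inter> covered = {z}" "z \<in> b" "c \<in> P - {b}" for E z c
  proof -
    have "c \<subseteq> covered" "z \<notin> c"
      using that(2,3) P_disjoint \<open>b \<in> P\<close> unfolding covered_def by blast+
    then show ?thesis using that(1) by auto
  qed
  have C': "C \<in> B" "C \<notin> P" "x \<in> C" "C \<inter> covered = {x}"
    and D': "D \<in> B" "D \<notin> P" "D \<inter> covered = {y}"
    using C D unfolding pendant_blocks_def blocks_through_def by auto
  define P' where "P' = insert C (insert D (P - {b}))"
  have rest: "E \<inter> c = {} \<and> c \<inter> E = {}" if "E \<in> {C, D}" "c \<in> P - {b}" for E c
    using that misses_rest[OF C'(4) \<open>x \<in> b\<close>] misses_rest[OF D'(3) \<open>y \<in> b\<close>] by blast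
  have "ppc B P'"
    unfolding ppc_def
  proof (intro conjI ballI impI)
    show "P' \<subseteq> B" unfolding P'_def using C' D' P_subset by blast
    fix c1 c2 assume "c1 \<in> P'" "c2 \<in> P'" "c1 \<noteq> c2"
    then consider "c1 \<in> {C, D}" "c2 \<in> {C, D}" | "c1 \<in> {C, D}" "c2 \<in> P - {b}"
      | "c1 \<in> P - {b}" "c2 \<in> {C, D}" | "c1 \<in> P - {b}" "c2 \<in> P - {b}"
      unfolding P'_def by blast
    then show "c1 \<inter> c2 = {}"
    proof cases
      case 1
      then show ?thesis using CD \<open>c1 \<noteq> c2\<close> by (auto simp: Int_commute)
    next
      case 2
      then show ?thesis using rest by blast
    next
      case 3
      then show ?thesis using rest by blast
    next
      case 4
      then show ?thesis using P_disjoint \<open>c1 \<noteq> c2\<close> by blast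
    qed
  qed
  moreover have "card P' = \<rho> + 1"
  proof -
    have "C \<noteq> D" using CD C'(3) by auto
    moreover have "card (P - {b}) = \<rho> - 1" using card_P \<open>b \<in> P\<close> finite_P by simp
    ultimately show ?thesis
      unfolding P'_def using C'(2) D'(2) finite_P rho_pos[OF \<open>x \<in> b\<close> \<open>b \<in> P\<close>] by simp
  qed
  ultimately show False using no_larger_ppc by blast
qed

lemma pendant_blocks_empty:
  assumes b: "b \<in> P" "x \<in> b" "y \<in> b" "x \<noteq> y"
    and many: "k \<le> card (pendant_blocks x)"
  shows "pendant_blocks y = {}"
proof (rule ccontr)
  assume "pendant_blocks y \<noteq> {}"
  then obtain D where D: "D \<in> pendant_blocks y" by blast
  then have "D \<in> B" "y \<in> D" "D \<inter> covered = {y}"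
    unfolding pendant_blocks_def blocks_through_def by auto
  have "x \<notin> D - {y}" using \<open>D \<inter> covered = {y}\<close> x_covered[OF b(2,1)] b(4) by blast
  have "pendant_blocks x \<subseteq> {C \<in> blocks_through x. C \<inter> (D - {y}) \<noteq> {}}"
  proof
    fix C assume C: "C \<in> pendant_blocks x"
    have "C \<inter> D \<noteq> {}" using pendant_blocks_meet[OF b C D] .
    moreover have "y \<notin> C"
      using C x_covered[OF b(3,1)] b(4) unfolding pendant_blocks_def by auto
    ultimately show "C \<in> {C \<in> blocks_through x. C \<inter> (D - {y}) \<noteq> {}}"
      using C unfolding pendant_blocks_def by blast
  qed
  then have "card (pendant_blocks x) \<le> card {C \<in> blocks_through x. C \<inter> (D - {y}) \<noteq> {}}"
    using finite_blocks_through by (intro card_mono) auto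
  also have "\<dots> \<le> card (D - {y})"
    using finite_block[OF \<open>D \<in> B\<close>] \<open>x \<notin> D - {y}\<close> by (intro card_blocks_through_meeting_le[OF b(2,1)]) auto
  also have "\<dots> = k - 1"
    using card_block[OF \<open>D \<in> B\<close>] \<open>y \<in> D\<close> finite_block[OF \<open>D \<in> B\<close>] by simp
  finally have "k \<le> k - 1" using many by linarith
  moreover have "0 < k"
    using card_block[OF \<open>D \<in> B\<close>] \<open>y \<in> D\<close> finite_block[OF \<open>D \<in> B\<close>] card_gt_0_iff by blast
  ultimately show False by linarith
qed

context
  assumes k_eq_4: "k = 4"
begin

lemma sum_weight_P_block_le:
  assumes b: "b \<in> P" and many_uncovered: "5 * \<rho> + 31 \<le> card uncovered"
  shows "(\<Sum>x\<in>b. weight x) \<le> (real (card uncovered) + real \<rho> - 1) / 3 + 6 * (real \<rho> - 1)"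
proof -
  have "finite b" "card b = 4" using b P_subset finite_block card_block k_eq_4 by auto
  show ?thesis
  proof (cases "\<exists>x\<in>b. 4 \<le> card (pendant_blocks x)")
    case True
    then obtain x where x: "x \<in> b" "4 \<le> card (pendant_blocks x)" by blast
    have "weight y \<le> 2 * (real \<rho> - 1)" if "y \<in> b - {x}" for y
      using that weight_le_pendant[of y b] pendant_blocks_empty[OF b x(1), of y] x(2) b k_eq_4
      by auto
    then have "(\<Sum>y\<in>b - {x}. weight y) \<le> (\<Sum>y\<in>b - {x}. 2 * (real \<rho> - 1))"
      by (rule sum_mono)
    also have "\<dots> = 6 * (real \<rho> - 1)" using \<open>card b = 4\<close> \<open>finite b\<close> x(1) by simp
    finally have "(\<Sum>y\<in>b - {x}. weight y) \<le> 6 * (real \<rho> - 1)" .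
    moreover have "weight x \<le> (real (card uncovered) + real \<rho> - 1) / 3"
      using weight_le_uncovered[OF x(1) b k_eq_4] by simp
    moreover have "(\<Sum>y\<in>b. weight y) = weight x + (\<Sum>y\<in>b - {x}. weight y)"
      using \<open>finite b\<close> x(1) by (simp add: sum.remove)
    ultimately show ?thesis by linarith
  next
    case False
    have "weight y \<le> 3 + 2 * (real \<rho> - 1)" if "y \<in> b" for y
    proof -
      have "\<not> 4 \<le> card (pendant_blocks y)" using False that by blast
      then have "real (card (pendant_blocks y)) \<le> 3" by simp
      moreover have "weight y \<le> real (card (pendant_blocks y)) + 2 * (real \<rho> - 1)"
        using weight_le_pendant[OF that b] k_eq_4 by (simp add: field_simps)
      ultimately show ?thesis by linarith
    qed
    then have "(\<Sum>y\<in>b. weight y) \<le> (\<Sum>y\<in>b. 3 + 2 * (real \<rho> - 1))" by (rule sum_mono)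
    also have "\<dots> = 4 * (3 + 2 * (real \<rho> - 1))" using \<open>card b = 4\<close> by simp
    finally have "(\<Sum>y\<in>b. weight y) \<le> 4 * (3 + 2 * (real \<rho> - 1))" .
    moreover have "real (5 * \<rho> + 31) \<le> real (card uncovered)"
      using many_uncovered by (rule of_nat_mono)
    ultimately show ?thesis by (simp add: field_simps)
  qed
qed

lemma card_B_le:
  assumes "9 * \<rho> + 31 \<le> v"
  shows "real (card B) \<le> real \<rho> * real v / 3 + 5 * (real \<rho>)^2 - 16 * real \<rho> / 3"
proof -
  have "card uncovered = v - 4 * \<rho>" using card_uncovered k_eq_4 by simp
  then have uncovered: "5 * \<rho> + 31 \<le> card uncovered" "real (card uncovered) = real v - 4 * real \<rho>"
    using assms by auto
  have "real (card B) = real \<rho> + (\<Sum>b\<in>P. \<Sum>x\<in>b. weight x)" by (rule card_B_eq_sum_weight)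
  also have "\<dots> \<le> real \<rho> + (\<Sum>b\<in>P. (real (card uncovered) + real \<rho> - 1) / 3 + 6 * (real \<rho> - 1))"
    by (intro add_left_mono sum_mono sum_weight_P_block_le[OF _ uncovered(1)])
  also have "\<dots> = real \<rho> * real v / 3 + 5 * (real \<rho>)^2 - 16 * real \<rho> / 3"
    using card_P unfolding uncovered(2) by (simp add: field_simps power2_eq_square)
  finally show ?thesis .
qed

end

end

theorem theorem3p12:
  fixes \<rho> v :: nat
  assumes "\<rho> \<ge> 1" and "v \<ge> 9 * \<rho> + 31"
  shows "real (beta \<rho> v 4) \<le> real \<rho> * real v / 3 + 5 * (real \<rho>)^2 - 16 * real \<rho> / 3"
  unfolding beta_def
proof (rule real_Sup_nat_le)
  show "bdd_above {card \<B> | (X :: nat set) \<B>. packing v 4 X \<B> \<and> max_ppc_size \<B> \<rho>}"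
    using card_packing_le by (intro bdd_aboveI[of _ "2 ^ v"]) blast
next
  fix n assume "n \<in> {card \<B> | (X :: nat set) \<B>. packing v 4 X \<B> \<and> max_ppc_size \<B> \<rho>}"
  then obtain X :: "nat set" and B P where "n = card B" "packing v 4 X B"
    "ppc B P" "card P = \<rho>" "\<not> (\<exists>P'. ppc B P' \<and> card P' = \<rho> + 1)"
    unfolding max_ppc_size_def by blast
  then interpret max_ppc_packing X B v 4 \<rho> P by unfold_locales
  show "real n \<le> real \<rho> * real v / 3 + 5 * (real \<rho>)^2 - 16 * real \<rho> / 3"
    using card_B_le[OF refl assms(2)] \<open>n = card B\<close> by simp
next
  have "16 \<le> real v" using assms(2) by simp
  then have "16 * real \<rho> / 3 \<le> real \<rho> * real v / 3"
    by (simp add: divide_right_mono mult.commute mult_left_mono)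
  moreover have "0 \<le> 5 * (real \<rho>)^2" by simp
  ultimately show "0 \<le> real \<rho> * real v / 3 + 5 * (real \<rho>)^2 - 16 * real \<rho> / 3" by linarith
qed

end
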